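(* Let $X$ be a set, let $f\in\omega^{\subset\omega}$ be $\mathrm{DNR}^X$, and let $U$ be a $2$-branching set of extensions of $f$. Then there is a $g\in U$ which is $\mathrm{DNR}^X$.
   Context: $\omega^{\subset\omega}$ is the set of partial functions from $\omega$ to $\omega$ with finite domain. $f\in\omega^{\subset\omega}$ is $\mathrm{DNR}^X$ if for every $e\in\operatorname{dom}(f)$ with $\varphi^X_e(e)\downarrow$, $\varphi^X_e(e)\neq f(e)$. For $f\in\omega^{\subset\omega}$, an $n$-branching set of extensions of $f$ of length $k$ is defined by induction on $k$: of length $1$, it is a set $U$ of $n$ functions such that for some fixed $x\notin\operatorname{dom}(f)$ each $g\in U$ satisfies $f\subseteq g$ and $\operatorname{dom}(g)=\operatorname{dom}(f)\cup\{x\}$; if $U_0$ is an $n$-branching set of extensions of $f$ of length $k$ and for each $g\in U_0$, $U_g$ is an $n$-branching set of extensions of $g$ of length $1$, then $\bigcup_{g\in U_0}U_g$ is an $n$-branching set of extensions of $f$ of length $k+1$. An $n$-branching set of extensions is one of some length $k\geq 1$. *)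

theory Defs
  imports Main "HOL-Library.Countable"
begin

text \<open>Codes of oracle partial recursive functions (Kleene-style schemes,
plus an oracle function for the characteristic function of X).\<close>
datatype recf =
    Zero
  | Succ
  | Proj nat
  | Orc
  | Comp recf "recf list"
  | Prim recf recf
  | Mu recf

instance recf :: countable by countable_datatype

inductive eval :: "nat set \<Rightarrow> recf \<Rightarrow> nat list \<Rightarrow> nat \<Rightarrow> bool"
  and evals :: "nat set \<Rightarrow> recf list \<Rightarrow> nat list \<Rightarrow> nat list \<Rightarrow> bool"
  for X :: "nat set" where
  ev_zero: "eval X Zero xs 0"
| ev_succ: "eval X Succ (x # xs) (Suc x)"
| ev_proj: "i < length xs \<Longrightarrow> eval X (Proj i) xs (xs ! i)"
| ev_orc: "eval X Orc (x # xs) (if x \<in> X then 1 else 0)"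
| ev_comp: "evals X gs xs ys \<Longrightarrow> eval X f ys z \<Longrightarrow> eval X (Comp f gs) xs z"
| ev_prim0: "eval X f xs y \<Longrightarrow> eval X (Prim f g) (0 # xs) y"
| ev_primS: "eval X (Prim f g) (n # xs) y \<Longrightarrow> eval X g (n # y # xs) z
             \<Longrightarrow> eval X (Prim f g) (Suc n # xs) z"
| ev_mu: "eval X f (n # xs) 0 \<Longrightarrow> (\<forall>m<n. \<exists>k. eval X f (m # xs) (Suc k))
             \<Longrightarrow> eval X (Mu f) xs n"
| evs_nil: "evals X [] xs []"
| evs_cons: "eval X g xs y \<Longrightarrow> evals X gs xs ys \<Longrightarrow> evals X (g # gs) xs (y # ys)"

definition phi :: "nat set \<Rightarrow> nat \<Rightarrow> nat \<Rightarrow> nat option" where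
  "phi X e x = (if \<exists>y. eval X (from_nat e) [x] y
                then Some (THE y. eval X (from_nat e) [x] y) else None)"

text \<open>Elements of \<open>\<omega>\<^sup>\<subset>\<^sup>\<omega>\<close>: partial maps nat \<rightharpoonup> nat with finite domain.\<close>
definition DNR :: "nat set \<Rightarrow> (nat \<rightharpoonup> nat) \<Rightarrow> bool" where
  "DNR X f \<longleftrightarrow> (\<forall>e \<in> dom f. \<forall>y. phi X e e = Some y \<longrightarrow> f e \<noteq> Some y)"

inductive branching :: "nat \<Rightarrow> (nat \<rightharpoonup> nat) \<Rightarrow> nat \<Rightarrow> (nat \<rightharpoonup> nat) set \<Rightarrow> bool"
  for n :: nat where
  br_one: "x \<notin> dom f \<Longrightarrow> finite U \<Longrightarrow> card U = n \<Longrightarrow>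
           (\<forall>g\<in>U. f \<subseteq>\<^sub>m g \<and> dom g = dom f \<union> {x}) \<Longrightarrow> branching n f 1 U"
| br_step: "branching n f k U0 \<Longrightarrow> (\<forall>g\<in>U0. branching n g 1 (V g)) \<Longrightarrow>
           branching n f (Suc k) (\<Union>g\<in>U0. V g)"

definition branching_set :: "nat \<Rightarrow> (nat \<rightharpoonup> nat) \<Rightarrow> (nat \<rightharpoonup> nat) set \<Rightarrow> bool" where
  "branching_set n f U \<longleftrightarrow> (\<exists>k\<ge>1. branching n f k U)"

end

theory Submission
  imports Defs
begin

text \<open>A one-point extension g of a DNR function f at a new argument x can only fail to be
DNR at x itself, and then g x = \<open>\<phi>\<^sup>X\<^sub>x(x)\<close>. Two one-point extensions of f at x that agree
at x are equal, so among the at least two extensions at each branching node at most one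
fails to be DNR; following DNR extensions down the levels yields a DNR member of U.\<close>

lemma one_point_extension_eqI:
  assumes "f \<subseteq>\<^sub>m g" "dom g = dom f \<union> {x}"
    and "f \<subseteq>\<^sub>m h" "dom h = dom f \<union> {x}"
    and "g x = h x"
  shows "g = h"
proof
  fix z
  show "g z = h z"
  proof (cases "z \<in> dom f")
    case True
    then show ?thesis using assms(1,3) by (metis map_le_def)
  next
    case False
    then have "z = x \<or> (z \<notin> dom g \<and> z \<notin> dom h)" using assms(2,4) by blast
    then show ?thesis using assms(5) by (auto simp: domIff)
  qed
qed

lemma non_DNR_one_point_extension:
  assumes "DNR X f" "f \<subseteq>\<^sub>m g" "dom g = dom f \<union> {x}" "\<not> DNR X g"
  shows "g x = phi X x x"
proof -
  from \<open>\<not> DNR X g\<close> obtain e y where e: "e \<in> dom g" "phi X e e = Some y" "g e = Some y"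
    unfolding DNR_def by blast
  have "e \<notin> dom f"
  proof
    assume "e \<in> dom f"
    then have "f e = Some y" using \<open>f \<subseteq>\<^sub>m g\<close> e(3) by (metis map_le_def)
    then show False using \<open>DNR X f\<close> \<open>e \<in> dom f\<close> e(2) unfolding DNR_def by blast
  qed
  then have "e = x" using e(1) assms(3) by blast
  then show ?thesis using e by simp
qed

lemma DNR_one_point_extension_exists:
  assumes "DNR X f" "finite U" "2 \<le> card U"
    and ext: "\<forall>g\<in>U. f \<subseteq>\<^sub>m g \<and> dom g = dom f \<union> {x}"
  shows "\<exists>g\<in>U. DNR X g"
proof (rule ccontr)
  assume none: "\<not> (\<exists>g\<in>U. DNR X g)"
  have "g = h" if "g \<in> U" "h \<in> U" for g h
    using ext that none non_DNR_one_point_extension[OF \<open>DNR X f\<close>]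
    by (metis one_point_extension_eqI)
  then have "card U \<le> 1" using card_le_Suc0_iff_eq[OF \<open>finite U\<close>] by simp
  with \<open>2 \<le> card U\<close> show False by simp
qed

lemma branching_DNR_exists:
  assumes "branching n f k U" "2 \<le> n" "DNR X f"
  shows "\<exists>g\<in>U. DNR X g"
  using assms
proof (induction rule: branching.induct)
  case (br_one x f U)
  then show ?case using DNR_one_point_extension_exists[of X f U x] by simp
next
  case (br_step f k U0 V)
  then obtain g where "g \<in> U0" "DNR X g" by blast
  with br_step obtain h where "h \<in> V g" "DNR X h" by blast
  with \<open>g \<in> U0\<close> show ?case by blast
qed

theorem mainTheorem6:
  fixes X :: "nat set" and f :: "nat \<rightharpoonup> nat" and U :: "(nat \<rightharpoonup> nat) set"
  assumes "finite (dom f)"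
    and "DNR X f"
    and "branching_set 2 f U"
  shows "\<exists>g\<in>U. DNR X g"
  using assms(2,3) branching_DNR_exists unfolding branching_set_def by blast

end
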